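(* Let $\mathbf{c}=\mathbf{a}+\mathbf{b}$. For every homogeneous polynomial $w\in\mathbb{Z}\langle \mathbf{a},\mathbf{b}\rangle$ of degree $n$ the following identities hold in $\mathbb{Z}[q]$: \begin{align*} \Theta(w\cdot \mathbf{c}) &= (1+q^{n+1})\cdot\Theta(w),\\ \Theta(G(w)) &= q\cdot [n]\cdot \Theta(w),\\ \Theta(\mathrm{Pyr}(w)) &= [n+2]\cdot\Theta(w),\\ \Theta(\mathrm{Bipyr}(w)) &= [2]\cdot[n+1]\cdot\Theta(w). \end{align*}
   Context: $\mathbb{Z}\langle \mathbf{a},\mathbf{b}\rangle$ is the ring of polynomials in the non-commuting variables $\mathbf{a},\mathbf{b}$. The Major MacMahon map $\Theta:\mathbb{Z}\langle \mathbf{a},\mathbf{b}\rangle\to\mathbb{Z}[q]$ is the $\mathbb{Z}$-linear map defined on monomials $w=u_1u_2\cdots u_n$ (each $u_i\in\{\mathbf{a},\mathbf{b}\}$) by $\Theta(w)=\prod_{i:\,u_i=\mathbf{b}} q^{i}$ (so $\Theta(1)=1$). For $m\ge 0$, $[m]=1+q+\cdots+q^{m-1}$ (so $[0]=0$). $G$ and $D$ are the derivations of $\mathbb{Z}\langle \mathbf{a},\mathbf{b}\rangle$ (linear maps satisfying $X(uv)=X(u)v+uX(v)$) determined by $G(\mathbf{a})=\mathbf{b}\mathbf{a}$, $G(\mathbf{b})=\mathbf{a}\mathbf{b}$, $D(\mathbf{a})=D(\mathbf{b})=\mathbf{a}\mathbf{b}+\mathbf{b}\mathbf{a}$, and $G(1)=D(1)=0$.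 The pyramid and bipyramid operators are the linear maps $\mathrm{Pyr}(w)=G(w)+w\cdot\mathbf{c}$ and $\mathrm{Bipyr}(w)=D(w)+\mathbf{c}\cdot w$. *)

theory Defs
  imports "HOL-Library.Poly_Mapping" "HOL-Computational_Algebra.Polynomial"
begin

text \<open>Words in the letters a, b are encoded as bool lists: False = a, True = b.
Elements of Z<a,b> are finitely supported integer combinations of words.\<close>

type_synonym ncword = "bool list"
type_synonym ncpoly = "ncword \<Rightarrow>\<^sub>0 int"

definition ncA :: ncpoly where "ncA = frag_of [False]"
definition ncB :: ncpoly where "ncB = frag_of [True]"
definition ncC :: ncpoly where "ncC = ncA + ncB"

definition ncmult :: "ncpoly \<Rightarrow> ncpoly \<Rightarrow> ncpoly" where
  "ncmult p r = frag_extend (\<lambda>u. frag_extend (\<lambda>v. frag_of (u @ v)) r) p"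

definition homogeneous :: "nat \<Rightarrow> ncpoly \<Rightarrow> bool" where
  "homogeneous n p \<longleftrightarrow> (\<forall>u\<in>Poly_Mapping.keys p. length u = n)"

definition theta_word :: "ncword \<Rightarrow> int poly" where
  "theta_word u = monom 1 (\<Sum>i\<in>{i. i < length u \<and> u ! i}. Suc i)"

definition Theta :: "ncpoly \<Rightarrow> int poly" where
  "Theta p = (\<Sum>u\<in>Poly_Mapping.keys p. smult (Poly_Mapping.lookup p u) (theta_word u))"

definition qint :: "nat \<Rightarrow> int poly" where
  "qint m = (\<Sum>k<m. monom 1 k)"

definition G_word :: "ncword \<Rightarrow> ncpoly" where
  "G_word u = (\<Sum>i<length u. frag_of (take i u @ (if u ! i then [False, True] else [True, False]) @ drop (Suc i) u))"

definition D_word :: "ncword \<Rightarrow> ncpoly" where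
  "D_word u = (\<Sum>i<length u. frag_of (take i u @ [False, True] @ drop (Suc i) u)
                          + frag_of (take i u @ [True, False] @ drop (Suc i) u))"

definition ncG :: "ncpoly \<Rightarrow> ncpoly" where "ncG = frag_extend G_word"
definition ncD :: "ncpoly \<Rightarrow> ncpoly" where "ncD = frag_extend D_word"

definition Pyr :: "ncpoly \<Rightarrow> ncpoly" where "Pyr w = ncG w + ncmult w ncC"
definition Bipyr :: "ncpoly \<Rightarrow> ncpoly" where "Bipyr w = ncD w + ncmult ncC w"

end

theory Submission
  imports Defs
begin

text \<open>All operators involved are linear, as is \<open>\<Theta>\<close>, so it suffices to treat a single word \<open>u\<close>.
  Appending a letter to a word of length \<open>m\<close> multiplies its weight by \<open>1\<close> or \<open>q\<^sup>m\<^sup>+\<^sup>1\<close>,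
  independently of the word itself. Hence, inducting on \<open>u\<close> from the right, the terms of
  \<open>G(ux)\<close> resp. \<open>Bipyr(ux)\<close> that leave the last letter alone contribute \<open>\<Theta>(G u)\<close> resp.
  \<open>\<Theta>(Bipyr u)\<close> times that common factor, while the terms expanding the last letter contribute
  an explicit multiple of \<open>\<Theta>(u)\<close>; the resulting recurrences are those of the \<open>q\<close>-integers.\<close>

abbreviation qX :: "int poly" where "qX \<equiv> [:0, 1:]"

lemma monom_one_eq_qX_power: "monom (1::int) k = qX ^ k"
  by (simp add: monom_altdef)

lemma qint_0 [simp]: "qint 0 = 0"
  by (simp add: qint_def)

lemma qint_Suc: "qint (Suc m) = qint m + qX ^ m"
  by (simp add: qint_def monom_one_eq_qX_power)

lemma qint_Suc_shift: "qint (Suc m) = 1 + qX * qint m"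
proof (induction m)
  case 0
  then show ?case by (simp add: qint_def)
next
  case (Suc m)
  have "qint (Suc (Suc m)) = 1 + qX * (qint m + qX ^ m)"
    using Suc by (simp only: qint_Suc[of "Suc m"]) (simp add: algebra_simps)
  then show ?case by (simp only: qint_Suc[of m])
qed

lemma qint_2: "qint 2 = 1 + qX"
  by (simp add: qint_def numeral_2_eq_2 monom_one_eq_qX_power)

lemma Theta_eq_sum_superset:
  assumes "finite S" "Poly_Mapping.keys p \<subseteq> S"
  shows "Theta p = (\<Sum>u\<in>S. smult (Poly_Mapping.lookup p u) (theta_word u))"
  unfolding Theta_def
  by (rule sum.mono_neutral_left) (use assms in \<open>auto simp: in_keys_iff\<close>)

lemma Theta_0 [simp]: "Theta 0 = 0"
  by (simp add: Theta_def)

lemma Theta_frag_of [simp]: "Theta (frag_of u) = theta_word u"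
  by (simp add: Theta_def keys_frag_of)

lemma Theta_add [simp]: "Theta (a + b) = Theta a + Theta b"
proof -
  let ?S = "Poly_Mapping.keys a \<union> Poly_Mapping.keys b"
  have "Theta (a + b) = (\<Sum>u\<in>?S. smult (Poly_Mapping.lookup (a + b) u) (theta_word u))"
    by (rule Theta_eq_sum_superset) (simp_all add: keys_add)
  also have "\<dots> = (\<Sum>u\<in>?S. smult (Poly_Mapping.lookup a u) (theta_word u))
                 + (\<Sum>u\<in>?S. smult (Poly_Mapping.lookup b u) (theta_word u))"
    by (simp add: lookup_add smult_add_left sum.distrib)
  also have "\<dots> = Theta a + Theta b"
    by (simp add: Theta_eq_sum_superset[of ?S])
  finally show ?thesis .
qed

lemma Theta_diff [simp]: "Theta (a - b) = Theta a - Theta b"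
  by (metis Theta_add diff_add_cancel eq_diff_eq)

lemma Theta_sum [simp]: "finite I \<Longrightarrow> Theta (\<Sum>i\<in>I. f i) = (\<Sum>i\<in>I. Theta (f i))"
  by (induction I rule: finite_induct) simp_all

lemma Theta_frag_extend_homogeneous:
  assumes "homogeneous n w"
    and word: "\<And>u. length u = n \<Longrightarrow> Theta (f u) = P * theta_word u"
  shows "Theta (frag_extend f w) = P * Theta w"
proof -
  have "Poly_Mapping.keys w \<subseteq> {u. length u = n}"
    using assms(1) by (auto simp: homogeneous_def)
  then show ?thesis
  proof (induction w rule: frag_induction)
    case (diff a b)
    then show ?case by (simp add: frag_extend_diff algebra_simps)
  qed (simp_all add: word)
qed

lemma frag_extend_plus:
  "frag_extend (\<lambda>u. f u + g u) w = frag_extend f w + frag_extend g w"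
  by (simp add: frag_extend_def frag_cmul_distrib2 sum.distrib)

lemma ncmult_eq_frag_extend: "ncmult w r = frag_extend (\<lambda>u. ncmult (frag_of u) r) w"
  by (simp add: ncmult_def)

lemma ncmult_ncC_left: "ncmult ncC w = frag_extend (\<lambda>u. frag_of (False # u) + frag_of (True # u)) w"
  by (simp add: ncmult_def ncC_def ncA_def ncB_def frag_extend_add frag_extend_plus)

lemma Pyr_eq_frag_extend: "Pyr w = frag_extend (\<lambda>u. Pyr (frag_of u)) w"
  by (simp add: Pyr_def ncG_def frag_extend_plus ncmult_eq_frag_extend[of w])

lemma Bipyr_eq_frag_extend: "Bipyr w = frag_extend (\<lambda>u. Bipyr (frag_of u)) w"
  by (simp add: Bipyr_def ncD_def ncmult_ncC_left frag_extend_plus)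

lemma theta_word_Nil [simp]: "theta_word [] = 1"
  by (simp add: theta_word_def)

lemma theta_word_snoc:
  "theta_word (u @ [x]) = theta_word u * (if x then qX ^ Suc (length u) else 1)"
proof -
  have positions: "{i. i < length (u @ [x]) \<and> (u @ [x]) ! i} =
      {i. i < length u \<and> u ! i} \<union> (if x then {length u} else {})"
    by (auto simp: nth_append less_Suc_eq)
  show ?thesis
  proof (cases x)
    case True
    then have "(\<Sum>i\<in>{i. i < length (u @ [x]) \<and> (u @ [x]) ! i}. Suc i) =
        (\<Sum>i\<in>{i. i < length u \<and> u ! i}. Suc i) + Suc (length u)"
      unfolding positions by (subst sum.union_disjoint) auto
    with True show ?thesis
      by (simp add: theta_word_def monom_one_eq_qX_power power_add)
  next
    case False
    then show ?thesis
      unfolding theta_word_def positions by simp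
  qed
qed

lemma theta_word_append_ab: "theta_word (u @ [False, True]) = theta_word u * qX ^ Suc (Suc (length u))"
  using theta_word_snoc[of "u @ [False]" True] theta_word_snoc[of u False] by simp

lemma theta_word_append_ba: "theta_word (u @ [True, False]) = theta_word u * qX ^ Suc (length u)"
  using theta_word_snoc[of "u @ [True]" False] theta_word_snoc[of u True] by simp

lemma Theta_ncmult_frag_of_ncC:
  "Theta (ncmult (frag_of u) ncC) = (1 + qX ^ Suc (length u)) * theta_word u"
  by (simp add: ncmult_def ncC_def ncA_def ncB_def frag_extend_add theta_word_snoc algebra_simps)

definition replace_at :: "'a list \<Rightarrow> nat \<Rightarrow> 'a list \<Rightarrow> 'a list" where
  "replace_at u i v = take i u @ v @ drop (Suc i) u"

lemma length_replace_at: "i < length u \<Longrightarrow> length (replace_at u i v) = length u + length v - 1"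
  by (simp add: replace_at_def)

lemma replace_at_snoc: "i < length u \<Longrightarrow> replace_at (u @ [x]) i v = replace_at u i v @ [x]"
  by (simp add: replace_at_def)

lemma theta_word_replace_at_snoc:
  assumes "i < length u" "length v = 2"
  shows "theta_word (replace_at u i v @ [x]) =
    theta_word (replace_at u i v) * (if x then qX ^ Suc (Suc (length u)) else 1)"
  using assms theta_word_snoc[of "replace_at u i v" x] by (simp add: length_replace_at)

lemma G_word_snoc:
  "G_word (u @ [x]) =
     (\<Sum>i<length u. frag_of (replace_at u i (if u ! i then [False, True] else [True, False]) @ [x]))
     + frag_of (u @ (if x then [False, True] else [True, False]))"
proof -
  have "G_word (u @ [x]) = (\<Sum>i<Suc (length u).
      frag_of (replace_at (u @ [x]) i (if (u @ [x]) ! i then [False, True] else [True, False])))"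
    by (simp add: G_word_def replace_at_def)
  also have "\<dots> = (\<Sum>i<length u.
      frag_of (replace_at u i (if u ! i then [False, True] else [True, False]) @ [x]))
      + frag_of (u @ (if x then [False, True] else [True, False]))"
    by (simp add: nth_append replace_at_snoc) (simp add: replace_at_def)
  finally show ?thesis .
qed

lemma Theta_G_word: "Theta (G_word u) = qX * qint (length u) * theta_word u"
proof (induction u rule: rev_induct)
  case Nil
  then show ?case by (simp add: G_word_def)
next
  case (snoc x u)
  let ?f = "if x then qX ^ Suc (Suc (length u)) else 1"
  let ?g = "\<lambda>i. replace_at u i (if u ! i then [False, True] else [True, False])"
  have "Theta (G_word (u @ [x])) = (\<Sum>i<length u. theta_word (?g i @ [x]))
      + theta_word (u @ (if x then [False, True] else [True, False]))"
    by (simp only: G_word_snoc Theta_add Theta_sum finite_lessThan Theta_frag_of)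
  also have "(\<Sum>i<length u. theta_word (?g i @ [x])) = (\<Sum>i<length u. theta_word (?g i)) * ?f"
    by (simp add: theta_word_replace_at_snoc sum_distrib_right)
  also have "(\<Sum>i<length u. theta_word (?g i)) = Theta (G_word u)"
    by (simp add: G_word_def replace_at_def)
  finally have *: "Theta (G_word (u @ [x])) = Theta (G_word u) * ?f
      + theta_word (u @ (if x then [False, True] else [True, False]))" .
  show ?case
  proof (cases x)
    case True
    with * show ?thesis
      by (simp add: snoc theta_word_append_ab theta_word_snoc qint_Suc_shift algebra_simps)
  next
    case False
    with * show ?thesis
      by (simp add: snoc theta_word_append_ba theta_word_snoc qint_Suc algebra_simps)
  qed
qed

lemma D_word_snoc:
  "D_word (u @ [x]) =
     (\<Sum>i<length u. frag_of (replace_at u i [False, True] @ [x])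
                    + frag_of (replace_at u i [True, False] @ [x]))
     + (frag_of (u @ [False, True]) + frag_of (u @ [True, False]))"
proof -
  have "D_word (u @ [x]) = (\<Sum>i<Suc (length u).
      frag_of (replace_at (u @ [x]) i [False, True]) + frag_of (replace_at (u @ [x]) i [True, False]))"
    by (simp add: D_word_def replace_at_def)
  then show ?thesis
    by (simp add: replace_at_snoc) (simp add: replace_at_def)
qed

lemma Bipyr_frag_of: "Bipyr (frag_of u) = D_word u + frag_of (False # u) + frag_of (True # u)"
  by (simp add: Bipyr_def ncD_def ncmult_ncC_left add.assoc)

lemma Theta_Bipyr_frag_of: "Theta (Bipyr (frag_of u)) = qint 2 * qint (Suc (length u)) * theta_word u"
proof (induction u rule: rev_induct)
  case Nil
  then show ?case by (simp add: Bipyr_frag_of D_word_def qint_2 qint_Suc theta_word_snoc[of "[]", simplified])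
next
  case (snoc x u)
  let ?f = "if x then qX ^ Suc (Suc (length u)) else 1"
  let ?g = "\<lambda>i. replace_at u i [False, True]" and ?h = "\<lambda>i. replace_at u i [True, False]"
  have "Theta (D_word (u @ [x])) =
      (\<Sum>i<length u. theta_word (?g i @ [x]) + theta_word (?h i @ [x]))
      + (theta_word (u @ [False, True]) + theta_word (u @ [True, False]))"
    by (simp only: D_word_snoc Theta_add Theta_sum finite_lessThan Theta_frag_of)
  also have "(\<Sum>i<length u. theta_word (?g i @ [x]) + theta_word (?h i @ [x])) =
      (\<Sum>i<length u. theta_word (?g i) + theta_word (?h i)) * ?f"
    by (simp add: theta_word_replace_at_snoc sum_distrib_right distrib_right)
  also have "(\<Sum>i<length u. theta_word (?g i) + theta_word (?h i)) = Theta (D_word u)"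
    by (simp add: D_word_def replace_at_def)
  also have "theta_word (u @ [False, True]) + theta_word (u @ [True, False]) =
      theta_word u * qX ^ Suc (length u) * (1 + qX)"
    by (simp only: theta_word_append_ab theta_word_append_ba power_Suc) (simp add: algebra_simps)
  finally have "Theta (D_word (u @ [x])) = Theta (D_word u) * ?f
      + theta_word u * qX ^ Suc (length u) * (1 + qX)" .
  moreover have "theta_word (b # u @ [x]) = theta_word (b # u) * ?f" for b
    using theta_word_snoc[of "b # u" x] by simp
  ultimately have "Theta (Bipyr (frag_of (u @ [x]))) =
      Theta (Bipyr (frag_of u)) * ?f + theta_word u * qX ^ Suc (length u) * (1 + qX)"
    by (simp add: Bipyr_frag_of algebra_simps)
  then have *: "Theta (Bipyr (frag_of (u @ [x]))) =
      (1 + qX) * qint (Suc (length u)) * theta_word u * ?f + theta_word u * qX ^ Suc (length u) * (1 + qX)"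
    by (simp only: snoc qint_2)
  show ?case
  proof (cases x)
    case True
    show ?thesis
      unfolding * by (simp only: True if_True length_append_singleton theta_word_snoc qint_2
          qint_Suc_shift[of "Suc (length u)"] power_Suc) algebra
  next
    case False
    show ?thesis
      unfolding * by (simp only: False if_False length_append_singleton theta_word_snoc qint_2
          qint_Suc[of "Suc (length u)"] power_Suc) algebra
  qed
qed

lemma Theta_Pyr_frag_of: "Theta (Pyr (frag_of u)) = qint (length u + 2) * theta_word u"
proof -
  have "Theta (Pyr (frag_of u)) = qX * qint (length u) * theta_word u
      + (1 + qX ^ Suc (length u)) * theta_word u"
    by (simp only: Pyr_def ncG_def frag_extend_of Theta_add Theta_G_word Theta_ncmult_frag_of_ncC)
  also have "\<dots> = (1 + qX * (qint (length u) + qX ^ length u)) * theta_word u"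
    by (simp only: power_Suc) algebra
  also have "\<dots> = qint (length u + 2) * theta_word u"
    by (simp only: qint_Suc_shift[of "Suc (length u)"] qint_Suc[of "length u"] add_2_eq_Suc')
  finally show ?thesis .
qed

theorem mainTheorem1:
  fixes w :: ncpoly and n :: nat
  assumes "homogeneous n w"
  shows "Theta (ncmult w ncC) = (1 + monom 1 (n + 1)) * Theta w \<and>
         Theta (ncG w) = monom 1 1 * qint n * Theta w \<and>
         Theta (Pyr w) = qint (n + 2) * Theta w \<and>
         Theta (Bipyr w) = qint 2 * qint (n + 1) * Theta w"
proof (intro conjI)
  show "Theta (ncmult w ncC) = (1 + monom 1 (n + 1)) * Theta w"
    unfolding ncmult_eq_frag_extend[of w]
    by (rule Theta_frag_extend_homogeneous[OF assms])
       (simp add: Theta_ncmult_frag_of_ncC monom_one_eq_qX_power)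
  show "Theta (ncG w) = monom 1 1 * qint n * Theta w"
    unfolding ncG_def
    by (rule Theta_frag_extend_homogeneous[OF assms]) (simp add: Theta_G_word monom_one_eq_qX_power)
  show "Theta (Pyr w) = qint (n + 2) * Theta w"
    unfolding Pyr_eq_frag_extend[of w]
    by (rule Theta_frag_extend_homogeneous[OF assms]) (simp add: Theta_Pyr_frag_of)
  show "Theta (Bipyr w) = qint 2 * qint (n + 1) * Theta w"
    unfolding Bipyr_eq_frag_extend[of w]
    by (rule Theta_frag_extend_homogeneous[OF assms]) (simp add: Theta_Bipyr_frag_of)
qed

end
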